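(* Let $f\in\mathcal{K}$ have radius of convergence $R>0$ and fulcrum $F$. Assume that $$\limsup_{s\uparrow\ln R}\frac{|F^{(k)}(s)|}{F''(s)^{k/2}}<+\infty\quad\text{for every integer }k\ge3.$$ Then $f$ is Gaussian if and only if $$\lim_{s\uparrow\ln R}\frac{F^{(k)}(s)}{F''(s)^{k/2}}=0\quad\text{for every integer }k\ge3.$$
   Context: The class $\mathcal{K}$ consists of non-constant power series $f(z)=\sum_{n\ge0}a_nz^n$ with radius of convergence $R\in(0,+\infty]$, with $a_n\ge 0$ for all $n$ and $a_0>0$. For $t\in(0,R)$, $X_t$ is the random variable with $\mathbf{P}(X_t=n)=a_nt^n/f(t)$, $n\ge0$. Write $m_f(t)=\mathbf{E}(X_t)$, $\sigma_f^2(t)=\mathbf{V}(X_t)>0$ and $\breve{X}_t=(X_t-m_f(t))/\sigma_f(t)$. $f$ is called Gaussian if $\breve{X}_t$ converges in distribution to a standard normal random variable as $t\uparrow R$. The fulcrum of $f$ is $F(s)=\ln f(e^s)$ for real $s<\ln R$ (with $\ln R=+\infty$ if $R=+\infty$); $F''(s)=\sigma_f^2(e^s)$. *)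

theory Defs
  imports "HOL-Probability.Probability"
begin

text \<open>A power series f(z) = sum a_n z^n is represented by its coefficient sequence a.\<close>

definition classK :: "(nat \<Rightarrow> real) \<Rightarrow> bool" where
  "classK a \<longleftrightarrow> (\<forall>n. a n \<ge> 0) \<and> a 0 > 0 \<and> (\<exists>n\<ge>1. a n \<noteq> 0)
                 \<and> conv_radius a > 0"

definition psum :: "(nat \<Rightarrow> real) \<Rightarrow> real \<Rightarrow> real" where
  "psum a t = (\<Sum>n. a n * t ^ n)"

definition prob_X :: "(nat \<Rightarrow> real) \<Rightarrow> real \<Rightarrow> nat set \<Rightarrow> real" where
  "prob_X a t A = (\<Sum>n. (if n \<in> A then a n * t ^ n else 0)) / psum a t"

definition mean_f :: "(nat \<Rightarrow> real) \<Rightarrow> real \<Rightarrow> real" where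
  "mean_f a t = (\<Sum>n. real n * (a n * t ^ n / psum a t))"

definition var_f :: "(nat \<Rightarrow> real) \<Rightarrow> real \<Rightarrow> real" where
  "var_f a t = (\<Sum>n. (real n - mean_f a t)\<^sup>2 * (a n * t ^ n / psum a t))"

definition sigma_f :: "(nat \<Rightarrow> real) \<Rightarrow> real \<Rightarrow> real" where
  "sigma_f a t = sqrt (var_f a t)"

definition left_filter :: "ereal \<Rightarrow> real filter" where
  "left_filter L = (if L = \<infinity> then at_top else at_left (real_of_ereal L))"

definition ln_ereal :: "ereal \<Rightarrow> ereal" where
  "ln_ereal R = (if R = \<infinity> then \<infinity> else ereal (ln (real_of_ereal R)))"

definition Phi :: "real \<Rightarrow> real" where
  "Phi x = measure (density lborel std_normal_density) {..x}"

text \<open>f is Gaussian: the normalized variable (X_t - m_f(t))/sigma_f(t) converges in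
  distribution to a standard normal variable as t tends to R from the left, i.e. its
  distribution functions converge pointwise to Phi (continuous everywhere).\<close>
definition gaussian :: "(nat \<Rightarrow> real) \<Rightarrow> bool" where
  "gaussian a \<longleftrightarrow> (\<forall>x::real.
     ((\<lambda>t. prob_X a t {n. (real n - mean_f a t) / sigma_f a t \<le> x}) \<longlongrightarrow> Phi x)
       (left_filter (conv_radius a)))"

definition fulcrum :: "(nat \<Rightarrow> real) \<Rightarrow> real \<Rightarrow> real" where
  "fulcrum a s = ln (psum a (exp s))"

end

(*
  Writing N(s) = exp(-c s) f(exp s), one has N' = N (F' - c), so Leibniz's rule expresses the
  moments of X_t about its mean c = F'(s), t = exp s, through the derivatives of the fulcrum:
  the standardized moments mu_k and the normalized cumulants kappa_k = F^(k) / F''^(k/2) obey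
  the moment-cumulant recursion mu_(m+1) = sum_i (m choose i) mu_i kappa_(m+1-i), with
  kappa_1 = 0 and kappa_2 = 1. The standard normal law is the one with kappa_k = 0 for k >= 3.

  If kappa_k -> 0 for all k >= 3, the recursion makes every mu_k converge to the k-th normal
  moment; as the normal law is determined by its moments (Levy continuity plus the Taylor
  expansion of characteristic functions), the standardized X_t converge in distribution.
  Conversely, bounded kappa_k give bounded moments of every order; together with convergence in
  distribution this forces mu_k to converge to the normal moments (truncation), and then the
  recursion, solved for kappa_k, forces kappa_k -> 0.
*)

theory Submission
  imports Defs
begin

section \<open>Functions with k derivatives on an open set\<close>

fun Ck_on :: "nat \<Rightarrow> real set \<Rightarrow> (real \<Rightarrow> real) \<Rightarrow> bool" where
  "Ck_on 0 S f \<longleftrightarrow> True"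
| "Ck_on (Suc k) S f \<longleftrightarrow> (\<forall>x\<in>S. (f has_real_derivative deriv f x) (at x)) \<and> Ck_on k S (deriv f)"

lemma Ck_on_SucD: "Ck_on (Suc k) S f \<Longrightarrow> Ck_on k S f"
  by (induction k arbitrary: f) auto

lemma higher_deriv_Suc_right: "(deriv ^^ Suc n) f = (deriv ^^ n) (deriv f)"
  by (simp add: funpow_Suc_right del: funpow.simps)

lemma higher_deriv_cong_on:
  assumes "open S" "\<And>x. x \<in> S \<Longrightarrow> f x = g x" "x \<in> S"
  shows "(deriv ^^ n) f x = (deriv ^^ n) g x"
proof -
  have "eventually (\<lambda>y. y \<in> S) (nhds x)"
    using assms by (intro eventually_nhds_in_open) auto
  then have "eventually (\<lambda>y. f y = g y) (nhds x)"
    by eventually_elim (use assms in auto)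
  then show ?thesis by (rule higher_deriv_cong_ev) simp
qed

lemma Ck_on_cong:
  assumes "open S" "\<And>x. x \<in> S \<Longrightarrow> f x = g x" "Ck_on k S f"
  shows "Ck_on k S g"
  using assms(2,3)
proof (induction k arbitrary: f g)
  case 0
  then show ?case by simp
next
  case (Suc k)
  have deriv_eq: "deriv f x = deriv g x" if "x \<in> S" for x
    using higher_deriv_cong_on[OF assms(1) Suc.prems(1) that, where n=1] by simp
  have "(g has_real_derivative deriv g x) (at x)" if x: "x \<in> S" for x
  proof -
    have "(f has_real_derivative deriv f x) (at x)"
      using Suc.prems x by auto
    then have "(g has_real_derivative deriv f x) (at x)"
      by (rule has_field_derivative_transform_within_open[OF _ assms(1) x]) (use Suc.prems in auto)
    then show ?thesis by (simp add: deriv_eq[OF x])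
  qed
  moreover have "Ck_on k S (deriv g)"
    using Suc.IH[of "deriv f" "deriv g"] Suc.prems deriv_eq by auto
  ultimately show ?case by simp
qed

lemma Ck_on_SucI:
  assumes "open S" "\<And>x. x \<in> S \<Longrightarrow> (f has_real_derivative f' x) (at x)" "Ck_on k S f'"
  shows "Ck_on (Suc k) S f"
proof -
  have deriv_eq: "deriv f x = f' x" if "x \<in> S" for x
    using assms(2)[OF that] by (rule DERIV_imp_deriv)
  have "Ck_on k S (deriv f)"
    by (rule Ck_on_cong[OF assms(1) _ assms(3)]) (simp add: deriv_eq)
  then show ?thesis using assms(2) deriv_eq by simp
qed

lemma Ck_on_const: "Ck_on k S (\<lambda>x. c)"
  by (induction k arbitrary: c) simp_all

lemma Ck_on_add:
  assumes "open S" "Ck_on k S f" "Ck_on k S g"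
  shows "Ck_on k S (\<lambda>x. f x + g x)"
  using assms(2,3)
proof (induction k arbitrary: f g)
  case 0
  then show ?case by simp
next
  case (Suc k)
  show ?case
  proof (rule Ck_on_SucI[OF assms(1)])
    show "((\<lambda>x. f x + g x) has_real_derivative deriv f x + deriv g x) (at x)" if "x \<in> S" for x
      using Suc.prems that by (auto intro!: derivative_intros)
    show "Ck_on k S (\<lambda>x. deriv f x + deriv g x)"
      using Suc by simp
  qed
qed

lemma Ck_on_mult:
  assumes "open S" "Ck_on k S f" "Ck_on k S g"
  shows "Ck_on k S (\<lambda>x. f x * g x)"
  using assms(2,3)
proof (induction k arbitrary: f g)
  case 0
  then show ?case by simp
next
  case (Suc k)
  show ?case
  proof (rule Ck_on_SucI[OF assms(1)])
    show "((\<lambda>x. f x * g x) has_real_derivative deriv f x * g x + f x * deriv g x) (at x)"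
      if "x \<in> S" for x
      using Suc.prems that by (auto intro!: derivative_eq_intros)
    have "Ck_on k S (\<lambda>x. deriv f x * g x)" "Ck_on k S (\<lambda>x. f x * deriv g x)"
      using Suc.IH Suc.prems Ck_on_SucD by auto
    then show "Ck_on k S (\<lambda>x. deriv f x * g x + f x * deriv g x)"
      by (rule Ck_on_add[OF assms(1)])
  qed
qed

lemma Ck_on_inverse:
  assumes "open S" "Ck_on k S f" "\<And>x. x \<in> S \<Longrightarrow> f x \<noteq> 0"
  shows "Ck_on k S (\<lambda>x. inverse (f x))"
  using assms(2)
proof (induction k)
  case 0
  then show ?case by simp
next
  case (Suc k)
  show ?case
  proof (rule Ck_on_SucI[OF assms(1)])
    show "((\<lambda>x. inverse (f x)) has_real_derivative
            (- 1) * (deriv f x * (inverse (f x) * inverse (f x)))) (at x)" if "x \<in> S" for x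
      using Suc.prems that assms(3)[OF that]
      by (auto intro!: derivative_eq_intros simp: field_simps power2_eq_square)
    have "Ck_on k S (\<lambda>x. inverse (f x))" "Ck_on k S (deriv f)"
      using Suc Ck_on_SucD by auto
    then show "Ck_on k S (\<lambda>x. (- 1) * (deriv f x * (inverse (f x) * inverse (f x))))"
      by (intro Ck_on_mult Ck_on_const assms(1))
  qed
qed

lemma Ck_on_iff_higher_deriv:
  "Ck_on n S f \<longleftrightarrow>
     (\<forall>i<n. \<forall>x\<in>S. ((deriv ^^ i) f has_real_derivative (deriv ^^ Suc i) f x) (at x))"
proof (induction n arbitrary: f)
  case 0
  then show ?case by simp
next
  case (Suc n)
  show ?case
    unfolding Ck_on.simps Suc.IH
    by (simp only: higher_deriv_Suc_right[symmetric]) (auto simp: less_Suc_eq_0_disj)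
qed

lemma sum_choose_Suc_product:
  fixes u v :: "nat \<Rightarrow> 'a::comm_semiring_1"
  shows "(\<Sum>i = 0..Suc n. of_nat (Suc n choose i) * u i * v (Suc n - i)) =
         (\<Sum>i = 0..n. of_nat (n choose i) * (u (Suc i) * v (n - i) + u i * v (Suc (n - i))))"
proof -
  have pascal: "of_nat (Suc n choose i) =
      of_nat (n choose i) + (of_nat (if i = 0 then 0 else n choose (i - 1)) :: 'a)" for i
    by (cases i) (simp_all add: add.commute)
  have "(\<Sum>i = 0..Suc n. of_nat (Suc n choose i) * u i * v (Suc n - i)) =
      (\<Sum>i = 0..Suc n. of_nat (n choose i) * u i * v (Suc n - i)) +
      (\<Sum>i = 0..Suc n. of_nat (if i = 0 then 0 else n choose (i - 1)) * u i * v (Suc n - i))"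
    by (simp only: pascal distrib_right sum.distrib)
  also have "(\<Sum>i = 0..Suc n. of_nat (n choose i) * u i * v (Suc n - i)) =
      (\<Sum>i = 0..n. of_nat (n choose i) * u i * v (Suc (n - i)))"
    by (simp add: Suc_diff_le binomial_eq_0)
  also have "(\<Sum>i = 0..Suc n. of_nat (if i = 0 then 0 else n choose (i - 1)) * u i * v (Suc n - i)) =
      (\<Sum>i = 0..n. of_nat (n choose i) * u (Suc i) * v (n - i))"
    by (subst sum.atLeast0_atMost_Suc_shift) simp
  finally show ?thesis
    by (simp add: sum.distrib algebra_simps)
qed

lemma higher_deriv_mult_on:
  assumes "open S" "Ck_on n S f" "Ck_on n S g" "x \<in> S"
  shows "(deriv ^^ n) (\<lambda>x. f x * g x) x =
           (\<Sum>i = 0..n. of_nat (n choose i) * (deriv ^^ i) f x * (deriv ^^ (n - i)) g x)"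
  using assms(2-4)
proof (induction n arbitrary: x)
  case 0
  then show ?case by simp
next
  case (Suc n x)
  have Ck: "Ck_on n S f" "Ck_on n S g"
    using Suc.prems Ck_on_SucD by blast+
  have f': "\<And>i. i \<le> n \<Longrightarrow> ((deriv ^^ i) f has_real_derivative (deriv ^^ Suc i) f x) (at x)"
   and g': "\<And>i. i \<le> n \<Longrightarrow> ((deriv ^^ i) g has_real_derivative (deriv ^^ Suc i) g x) (at x)"
    using Suc.prems unfolding Ck_on_iff_higher_deriv by auto
  have "((\<lambda>y. \<Sum>i = 0..n. of_nat (n choose i) * (deriv ^^ i) f y * (deriv ^^ (n - i)) g y)
      has_real_derivative (\<Sum>i = 0..n. of_nat (n choose i) *
        ((deriv ^^ Suc i) f x * (deriv ^^ (n - i)) g x + (deriv ^^ i) f x * (deriv ^^ Suc (n - i)) g x)))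
      (at x)"
  proof (rule DERIV_sum)
    fix i assume "i \<in> {0..n}"
    then show "((\<lambda>y. of_nat (n choose i) * (deriv ^^ i) f y * (deriv ^^ (n - i)) g y)
      has_real_derivative of_nat (n choose i) *
        ((deriv ^^ Suc i) f x * (deriv ^^ (n - i)) g x + (deriv ^^ i) f x * (deriv ^^ Suc (n - i)) g x))
      (at x)"
      using DERIV_cmult[OF DERIV_mult[OF f' g'], of i "n - i" "of_nat (n choose i)"]
      by (simp add: algebra_simps del: funpow.simps)
  qed
  also note sum_choose_Suc_product[symmetric]
  finally have "((deriv ^^ n) (\<lambda>x. f x * g x) has_real_derivative
      (\<Sum>i = 0..Suc n. of_nat (Suc n choose i) * (deriv ^^ i) f x * (deriv ^^ (Suc n - i)) g x)) (at x)"
    by (rule has_field_derivative_transform_within_open[OF _ assms(1) Suc.prems(3)])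
       (use Suc.IH[OF Ck] in simp)
  then show ?case
    by (simp add: DERIV_imp_deriv)
qed

lemma higher_deriv_derivative_chain:
  assumes "open S" "\<And>k x. x \<in> S \<Longrightarrow> (h k has_real_derivative h (Suc k) x) (at x)" "x \<in> S"
  shows "(deriv ^^ n) (h j) x = h (j + n) x"
  using assms(3)
proof (induction n arbitrary: j x)
  case 0
  then show ?case by simp
next
  case (Suc n)
  have "(deriv ^^ n) (deriv (h j)) x = (deriv ^^ n) (h (Suc j)) x"
    using assms(2) by (intro higher_deriv_cong_on[OF assms(1) _ Suc.prems] DERIV_imp_deriv)
  then show ?case
    using Suc by (simp add: higher_deriv_Suc_right del: funpow.simps)
qed

lemma Ck_on_derivative_chain:
  assumes "open S" "\<And>k x. x \<in> S \<Longrightarrow> (h k has_real_derivative h (Suc k) x) (at x)"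
  shows "Ck_on n S (h j)"
  unfolding Ck_on_iff_higher_deriv
proof (intro allI impI ballI)
  fix i x assume "x \<in> S"
  have "(h (j + i) has_real_derivative (deriv ^^ Suc i) (h j) x) (at x)"
    using assms(2)[OF \<open>x \<in> S\<close>, of "j + i"]
    by (simp add: higher_deriv_derivative_chain[of S h, OF assms \<open>x \<in> S\<close>] del: funpow.simps)
  then show "((deriv ^^ i) (h j) has_real_derivative (deriv ^^ Suc i) (h j) x) (at x)"
    by (rule has_field_derivative_transform_within_open[OF _ assms(1) \<open>x \<in> S\<close>])
       (simp add: higher_deriv_derivative_chain[of S h, OF assms])
qed

lemma higher_deriv_Suc_if_deriv_eq_mult:
  assumes "open S" "Ck_on (Suc m) S N" "Ck_on m S g"
    and "\<And>x. x \<in> S \<Longrightarrow> deriv N x = N x * g x" "x \<in> S"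
  shows "(deriv ^^ Suc m) N x =
           (\<Sum>i = 0..m. of_nat (m choose i) * (deriv ^^ i) N x * (deriv ^^ (m - i)) g x)"
proof -
  have "(deriv ^^ Suc m) N x = (deriv ^^ m) (\<lambda>x. N x * g x) x"
    unfolding higher_deriv_Suc_right by (rule higher_deriv_cong_on[OF assms(1) assms(4) assms(5)])
  also have "\<dots> = (\<Sum>i = 0..m. of_nat (m choose i) * (deriv ^^ i) N x * (deriv ^^ (m - i)) g x)"
    using assms(2) Ck_on_SucD by (intro higher_deriv_mult_on[OF assms(1) _ assms(3,5)])
  finally show ?thesis .
qed

lemma deriv_diff_const: "deriv (\<lambda>x. f x - c) = deriv (f :: 'a::real_normed_field \<Rightarrow> 'a)"
proof -
  have "((\<lambda>x. f x - c) has_field_derivative D) (at x) \<longleftrightarrow> (f has_field_derivative D) (at x)" for x D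
    using DERIV_add[OF _ DERIV_const[of c], of "\<lambda>x. f x - c" D x] DERIV_diff[OF _ DERIV_const[of c], of f D x]
    by auto
  then show ?thesis
    unfolding deriv_def by simp
qed

lemma higher_deriv_deriv_diff_const:
  "(deriv ^^ j) (\<lambda>x. deriv f x - c) x = (if j = 0 then deriv f x - c else (deriv ^^ Suc j) f x)"
  by (cases j) (simp_all add: higher_deriv_Suc_right deriv_diff_const del: funpow.simps)

lemma conv_radius_of_nat_mult_ge: "conv_radius b \<le> conv_radius (\<lambda>n. of_nat n * b n :: real)"
proof (rule conv_radius_geI_ex')
  fix r :: real assume r: "0 < r" "ereal r < conv_radius b"
  obtain K where K: "ereal r < ereal K" "ereal K < conv_radius b"
    using ereal_dense2[OF r(2)] by auto
  have "summable (\<lambda>n. b n * x ^ n)" if "norm x < K" for x :: real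
    using that K(2) by (intro summable_in_conv_radius) (auto intro: less_trans[where y="ereal K"])
  then have "summable (\<lambda>n. diffs b n * r ^ n)"
    using K r by (intro termdiff_converges[where K=K]) auto
  from diffs_equiv[OF this] have "summable (\<lambda>n. of_nat n * b n * r ^ (n - Suc 0) * r)"
    by (intro summable_mult2) (simp add: sums_iff)
  moreover have "of_nat n * b n * r ^ (n - Suc 0) * r = of_nat n * b n * r ^ n" for n
    by (cases n) auto
  ultimately show "summable (\<lambda>n. of_nat n * b n * of_real r ^ n)"
    by simp
qed

lemma conv_radius_centered_power_ge: "conv_radius b \<le> conv_radius (\<lambda>n. b n * (real n - c) ^ k)"
proof (induction k)
  case 0
  then show ?case by simp
next
  case (Suc k)
  let ?b = "\<lambda>n. b n * (real n - c) ^ k"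
  have "conv_radius b \<le> conv_radius (\<lambda>n. of_nat n * ?b n :: real)"
    using Suc conv_radius_of_nat_mult_ge[of ?b] by (rule order_trans)
  moreover have "conv_radius b \<le> conv_radius (\<lambda>n. (- c) * ?b n :: real)"
    using Suc conv_radius_cmult_left[of "- c" ?b] by (cases "c = 0") auto
  ultimately have "conv_radius b \<le> min (conv_radius (\<lambda>n. of_nat n * ?b n :: real))
      (conv_radius (\<lambda>n. (- c) * ?b n :: real))"
    by simp
  also have "\<dots> \<le> conv_radius (\<lambda>n. of_nat n * ?b n + (- c) * ?b n)"
    by (rule conv_radius_add_ge)
  also have "(\<lambda>n. of_nat n * ?b n + (- c) * ?b n) = (\<lambda>n. b n * (real n - c) ^ Suc k)"
    by (simp add: fun_eq_iff algebra_simps)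
  finally show ?case .
qed

lemma psum_diff_cmult:
  assumes "ereal \<bar>t\<bar> < conv_radius f" "ereal \<bar>t\<bar> < conv_radius g"
  shows "psum (\<lambda>n. f n - c * g n) t = psum f t - c * psum g t"
proof -
  have f: "summable (\<lambda>n. f n * t ^ n)" and g: "summable (\<lambda>n. g n * t ^ n)"
    using assms by (auto intro!: summable_in_conv_radius)
  show ?thesis
    using suminf_diff[OF f summable_mult[OF g, of c]] suminf_mult[OF g, of c]
    unfolding psum_def by (simp add: left_diff_distrib mult.assoc)
qed

lemma has_real_derivative_psum_exp:
  assumes "ereal (exp s) < conv_radius b"
  shows "((\<lambda>s. psum b (exp s)) has_real_derivative psum (\<lambda>n. of_nat n * b n) (exp s)) (at s)"
proof -
  obtain K where K: "ereal (exp s) < ereal K" "ereal K < conv_radius b"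
    using ereal_dense2[OF assms] by auto
  have sum_b: "summable (\<lambda>n. b n * x ^ n)" if "norm x < K" for x :: real
    using that K(2) by (intro summable_in_conv_radius) (auto intro: less_trans[where y="ereal K"])
  have "(psum b has_real_derivative (\<Sum>n. diffs b n * exp s ^ n)) (at (exp s))"
    unfolding psum_def[abs_def] by (rule termdiffs_strong'[where K=K]) (use sum_b K in auto)
  from DERIV_chain2[OF this DERIV_exp]
  have "((\<lambda>s. psum b (exp s)) has_real_derivative (\<Sum>n. diffs b n * exp s ^ n) * exp s) (at s)"
    by simp
  moreover have "(\<Sum>n. diffs b n * exp s ^ n) * exp s = psum (\<lambda>n. of_nat n * b n) (exp s)"
  proof -
    have "summable (\<lambda>n. diffs b n * exp s ^ n)"
      by (rule termdiff_converges[where K=K]) (use K sum_b in auto)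
    from sums_mult2[OF diffs_equiv[OF this], of "exp s"]
    have "(\<lambda>n. of_nat n * b n * exp s ^ (n - Suc 0) * exp s) sums ((\<Sum>n. diffs b n * exp s ^ n) * exp s)" .
    moreover have "of_nat n * b n * exp s ^ (n - Suc 0) * exp s = of_nat n * b n * exp s ^ n" for n
      by (cases n) auto
    ultimately show ?thesis
      unfolding psum_def by (simp add: sums_iff)
  qed
  ultimately show ?thesis
    by simp
qed

definition fulcrum_domain :: "(nat \<Rightarrow> real) \<Rightarrow> real set" where
  "fulcrum_domain a = {s. ereal (exp s) < conv_radius a}"

lemma open_fulcrum_domain: "open (fulcrum_domain a)"
  unfolding fulcrum_domain_def by (rule open_Collect_less) (auto intro!: continuous_intros)

definition centered_coeffs :: "(nat \<Rightarrow> real) \<Rightarrow> real \<Rightarrow> nat \<Rightarrow> nat \<Rightarrow> real" where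
  "centered_coeffs a c k n = a n * (real n - c) ^ k"

lemma centered_coeffs_0 [simp]: "centered_coeffs a c 0 = a"
  by (simp add: fun_eq_iff centered_coeffs_def)

definition centered_series :: "(nat \<Rightarrow> real) \<Rightarrow> real \<Rightarrow> nat \<Rightarrow> real \<Rightarrow> real" where
  "centered_series a c k s = exp (- c * s) * psum (centered_coeffs a c k) (exp s)"

lemma exp_less_conv_radius_centered_coeffs:
  "s \<in> fulcrum_domain a \<Longrightarrow> ereal (exp s) < conv_radius (centered_coeffs a c k)"
  using conv_radius_centered_power_ge[of a c k]
  unfolding fulcrum_domain_def centered_coeffs_def[abs_def] by auto

lemma centered_series_has_derivative:
  assumes "s \<in> fulcrum_domain a"
  shows "(centered_series a c k has_real_derivative centered_series a c (Suc k) s) (at s)"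
proof -
  let ?b = "centered_coeffs a c k"
  have "ereal (exp s) < conv_radius (\<lambda>n. of_nat n * ?b n)"
    using exp_less_conv_radius_centered_coeffs[OF assms] conv_radius_of_nat_mult_ge
    by (rule less_le_trans)
  moreover have "centered_coeffs a c (Suc k) = (\<lambda>n. of_nat n * ?b n - c * ?b n)"
    by (auto simp: centered_coeffs_def algebra_simps)
  ultimately have shift: "psum (\<lambda>n. of_nat n * ?b n) (exp s) =
      psum (centered_coeffs a c (Suc k)) (exp s) + c * psum ?b (exp s)"
    using exp_less_conv_radius_centered_coeffs[OF assms] by (simp add: psum_diff_cmult)
  have "((\<lambda>s. exp (- c * s)) has_real_derivative - c * exp (- c * s)) (at s)"
    by (auto intro!: derivative_eq_intros)
  moreover have "((\<lambda>s. psum ?b (exp s)) has_real_derivative psum (\<lambda>n. of_nat n * ?b n) (exp s)) (at s)"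
    using exp_less_conv_radius_centered_coeffs[OF assms] by (rule has_real_derivative_psum_exp)
  ultimately have "(centered_series a c k has_real_derivative
      - c * exp (- c * s) * psum ?b (exp s) + psum (\<lambda>n. of_nat n * ?b n) (exp s) * exp (- c * s)) (at s)"
    unfolding centered_series_def[abs_def] by (rule DERIV_mult)
  then show ?thesis
    by (rule DERIV_cong) (simp add: centered_series_def shift algebra_simps)
qed

lemma higher_deriv_centered_series:
  "s \<in> fulcrum_domain a \<Longrightarrow> (deriv ^^ n) (centered_series a c k) s = centered_series a c (k + n) s"
  using centered_series_has_derivative
  by (rule higher_deriv_derivative_chain[of _ "centered_series a c", OF open_fulcrum_domain])

lemma Ck_on_centered_series: "Ck_on n (fulcrum_domain a) (centered_series a c k)"
  using centered_series_has_derivative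
  by (rule Ck_on_derivative_chain[of _ "centered_series a c", OF open_fulcrum_domain])

section \<open>Moments of X_t and derivatives of the fulcrum\<close>

lemma classK_psum_pos:
  assumes "classK a" "0 \<le> t" "ereal t < conv_radius a"
  shows "psum a t > 0"
proof -
  have "(\<Sum>n<1. a n * t ^ n) \<le> (\<Sum>n. a n * t ^ n)"
    using assms by (intro sum_le_suminf summable_in_conv_radius) (auto simp: classK_def)
  then show ?thesis
    using assms(1) unfolding classK_def psum_def by auto
qed

definition moment_about :: "(nat \<Rightarrow> real) \<Rightarrow> real \<Rightarrow> nat \<Rightarrow> real \<Rightarrow> real" where
  "moment_about a c k s = psum (centered_coeffs a c k) (exp s) / psum a (exp s)"

definition std_moment :: "(nat \<Rightarrow> real) \<Rightarrow> nat \<Rightarrow> real \<Rightarrow> real" where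
  "std_moment a k s = (\<Sum>n. ((real n - mean_f a (exp s)) / sigma_f a (exp s)) ^ k *
                            (a n * exp s ^ n / psum a (exp s)))"

text \<open>Cumulants of the standardized variable: the first one is 0, while cumulants of order at
  least 2 are shift invariant.\<close>

definition std_cumulant :: "(nat \<Rightarrow> real) \<Rightarrow> nat \<Rightarrow> real \<Rightarrow> real" where
  "std_cumulant a k s = (if k = 1 then 0
     else (deriv ^^ k) (fulcrum a) s / ((deriv ^^ 2) (fulcrum a) s) powr (real k / 2))"

lemma std_cumulant_1 [simp]: "std_cumulant a 1 s = 0"
  by (simp add: std_cumulant_def)

lemma powr_half_nat: "0 < x \<Longrightarrow> x powr (real k / 2) = sqrt x ^ k"
  by (simp add: powr_half_sqrt[symmetric] powr_realpow[symmetric] powr_powr)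

context
  fixes a :: "nat \<Rightarrow> real"
  assumes classK: "classK a"
begin

lemma psum_exp_pos: "s \<in> fulcrum_domain a \<Longrightarrow> psum a (exp s) > 0"
  using classK_psum_pos[OF classK] by (simp add: fulcrum_domain_def)

lemma fulcrum_has_derivative:
  assumes "s \<in> fulcrum_domain a"
  shows "(fulcrum a has_real_derivative psum (centered_coeffs a 0 1) (exp s) / psum a (exp s)) (at s)"
proof -
  have "(\<lambda>n. of_nat n * a n) = centered_coeffs a 0 1"
    by (simp add: fun_eq_iff centered_coeffs_def)
  then have "((\<lambda>s. psum a (exp s)) has_real_derivative psum (centered_coeffs a 0 1) (exp s)) (at s)"
    using has_real_derivative_psum_exp[of s a] assms by (simp add: fulcrum_domain_def)
  then show ?thesis
    unfolding fulcrum_def[abs_def] using psum_exp_pos[OF assms]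
    by (auto intro!: derivative_eq_intros)
qed

lemma Ck_on_fulcrum: "Ck_on k (fulcrum_domain a) (fulcrum a)"
proof (cases k)
  case 0
  then show ?thesis by simp
next
  case (Suc k')
  have "Ck_on k' (fulcrum_domain a) (\<lambda>s. centered_series a 0 1 s * inverse (centered_series a 0 0 s))"
    by (intro Ck_on_mult Ck_on_inverse Ck_on_centered_series open_fulcrum_domain)
       (auto dest: psum_exp_pos simp: centered_series_def)
  then have Ck_deriv:
      "Ck_on k' (fulcrum_domain a) (\<lambda>s. psum (centered_coeffs a 0 1) (exp s) / psum a (exp s))"
    by (simp add: centered_series_def centered_coeffs_def field_simps)
  show ?thesis
    unfolding Suc by (rule Ck_on_SucI[OF open_fulcrum_domain _ Ck_deriv]) (rule fulcrum_has_derivative)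
qed

lemma deriv_centered_series_0:
  assumes x: "x \<in> fulcrum_domain a"
  shows "deriv (centered_series a c 0) x = centered_series a c 0 x * (deriv (fulcrum a) x - c)"
proof -
  have "centered_coeffs a c 1 = (\<lambda>n. centered_coeffs a 0 1 n - c * a n)"
    by (simp add: fun_eq_iff centered_coeffs_def algebra_simps)
  then have Q1: "psum (centered_coeffs a c 1) (exp x) =
      psum (centered_coeffs a 0 1) (exp x) - c * psum a (exp x)"
    using exp_less_conv_radius_centered_coeffs[OF x] x
    by (simp add: psum_diff_cmult fulcrum_domain_def)
  have F': "deriv (fulcrum a) x = psum (centered_coeffs a 0 1) (exp x) / psum a (exp x)"
    using fulcrum_has_derivative[OF x] by (rule DERIV_imp_deriv)
  have "deriv (centered_series a c 0) x = exp (- c * x) * psum (centered_coeffs a c 1) (exp x)"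
    using higher_deriv_centered_series[OF x, of 1 c 0] by (simp add: centered_series_def)
  also have "\<dots> = centered_series a c 0 x * (deriv (fulcrum a) x - c)"
    using psum_exp_pos[OF x] by (simp only: Q1 F') (simp add: centered_series_def field_simps)
  finally show ?thesis .
qed

text \<open>Leibniz's rule applied to \<open>N' = N (F' - c)\<close>, where \<open>N = centered_series a c 0\<close>;
  for \<open>c = F'(s)\<close> the term \<open>i = m\<close> vanishes.\<close>

lemma moment_about_recursion:
  assumes s: "s \<in> fulcrum_domain a" and c: "c = deriv (fulcrum a) s"
  shows "moment_about a c (Suc m) s = (\<Sum>i = 0..m. of_nat (m choose i) * moment_about a c i s *
           (if i = m then 0 else (deriv ^^ Suc (m - i)) (fulcrum a) s))"
proof -
  let ?N = "centered_series a c 0" and ?g = "\<lambda>x. deriv (fulcrum a) x - c"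
  have N_pos: "?N s > 0"
    using psum_exp_pos[OF s] by (simp add: centered_series_def)
  have Ck_g: "Ck_on m (fulcrum_domain a) ?g"
    using Ck_on_fulcrum[of "Suc m"]
    by (intro Ck_on_add[where g="\<lambda>_. - c", simplified] Ck_on_const open_fulcrum_domain) simp
  have "centered_series a c (Suc m) s =
      (\<Sum>i = 0..m. of_nat (m choose i) * centered_series a c i s * (deriv ^^ (m - i)) ?g s)"
    using higher_deriv_Suc_if_deriv_eq_mult[OF open_fulcrum_domain Ck_on_centered_series Ck_g
        deriv_centered_series_0 s]
    by (simp add: higher_deriv_centered_series[OF s] del: funpow.simps)
  moreover have "moment_about a c k s = centered_series a c k s / ?N s" for k
    by (simp add: moment_about_def centered_series_def centered_coeffs_def)
  moreover have "(deriv ^^ (m - i)) ?g s = (if i = m then 0 else (deriv ^^ Suc (m - i)) (fulcrum a) s)"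
    if "i \<in> {0..m}" for i
    using that c by (auto simp: higher_deriv_deriv_diff_const simp del: funpow.simps)
  ultimately show ?thesis
    using N_pos by (simp add: sum_divide_distrib del: funpow.simps)
qed

lemma moment_about_eq_suminf:
  assumes "s \<in> fulcrum_domain a"
  shows "moment_about a c k s = (\<Sum>n. (real n - c) ^ k * (a n * exp s ^ n / psum a (exp s)))"
proof -
  have "summable (\<lambda>n. centered_coeffs a c k n * exp s ^ n)"
    using exp_less_conv_radius_centered_coeffs[OF assms] by (intro summable_in_conv_radius) simp
  from suminf_divide[OF this, of "psum a (exp s)"] show ?thesis
    by (simp add: moment_about_def psum_def centered_coeffs_def mult_ac)
qed

lemma moment_about_0: "s \<in> fulcrum_domain a \<Longrightarrow> moment_about a c 0 s = 1"
  using psum_exp_pos[of s] by (simp add: moment_about_def)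

lemma moment_about_mean_1:
  "s \<in> fulcrum_domain a \<Longrightarrow> moment_about a (deriv (fulcrum a) s) 1 s = 0"
  using moment_about_recursion[of s _ 0] by simp

lemma moment_about_mean_2:
  "s \<in> fulcrum_domain a \<Longrightarrow> moment_about a (deriv (fulcrum a) s) 2 s = (deriv ^^ 2) (fulcrum a) s"
  using moment_about_recursion[of s _ 1] moment_about_0 moment_about_mean_1
  by (simp add: numeral_2_eq_2 del: funpow.simps)

lemma moment_about_2_pos:
  assumes s: "s \<in> fulcrum_domain a"
  shows "moment_about a c 2 s > 0"
proof -
  obtain m where "m \<ge> 1" "a m \<noteq> 0"
    using classK unfolding classK_def by auto
  then obtain j where "a j > 0" "real j \<noteq> c"
    using classK unfolding classK_def by (metis less_le of_nat_0 of_nat_eq_iff not_one_le_zero)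
  then have "0 < centered_coeffs a c 2 j * exp s ^ j"
    by (simp add: centered_coeffs_def)
  moreover have "summable (\<lambda>n. centered_coeffs a c 2 n * exp s ^ n)"
    using exp_less_conv_radius_centered_coeffs[OF s] by (intro summable_in_conv_radius) simp
  ultimately have "0 < psum (centered_coeffs a c 2) (exp s)"
    unfolding psum_def using classK
    by (intro suminf_pos2) (auto simp: centered_coeffs_def classK_def)
  then show ?thesis
    using psum_exp_pos[OF s] by (simp add: moment_about_def)
qed

lemma mean_f_exp: "s \<in> fulcrum_domain a \<Longrightarrow> mean_f a (exp s) = deriv (fulcrum a) s"
  using moment_about_eq_suminf[of s 0 1] DERIV_imp_deriv[OF fulcrum_has_derivative]
  by (simp add: mean_f_def moment_about_def)

lemma var_f_exp: "s \<in> fulcrum_domain a \<Longrightarrow> var_f a (exp s) = (deriv ^^ 2) (fulcrum a) s"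
  using moment_about_eq_suminf moment_about_mean_2 by (simp add: var_f_def mean_f_exp)

lemma fulcrum_deriv2_pos: "s \<in> fulcrum_domain a \<Longrightarrow> (deriv ^^ 2) (fulcrum a) s > 0"
  using moment_about_2_pos moment_about_mean_2 by metis

lemma std_moment_eq:
  assumes s: "s \<in> fulcrum_domain a"
  shows "std_moment a k s =
           moment_about a (deriv (fulcrum a) s) k s / sqrt ((deriv ^^ 2) (fulcrum a) s) ^ k"
proof -
  let ?c = "deriv (fulcrum a) s"
  have "summable (\<lambda>n. centered_coeffs a ?c k n * exp s ^ n / psum a (exp s))"
    using exp_less_conv_radius_centered_coeffs[OF s]
    by (intro summable_divide summable_in_conv_radius) simp
  from suminf_divide[OF this, of "sqrt ((deriv ^^ 2) (fulcrum a) s) ^ k"] show ?thesis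
    using moment_about_eq_suminf[OF s, of ?c k]
    by (simp add: std_moment_def sigma_f_def mean_f_exp var_f_exp s power_divide
        centered_coeffs_def mult_ac)
qed

lemma std_moment_0: "s \<in> fulcrum_domain a \<Longrightarrow> std_moment a 0 s = 1"
  by (simp add: std_moment_eq moment_about_0)

lemma std_cumulant_2: "s \<in> fulcrum_domain a \<Longrightarrow> std_cumulant a 2 s = 1"
  using fulcrum_deriv2_pos[of s] by (simp add: std_cumulant_def)

lemma std_moment_recursion:
  assumes s: "s \<in> fulcrum_domain a"
  shows "std_moment a (Suc m) s =
           (\<Sum>i = 0..m. of_nat (m choose i) * std_moment a i s * std_cumulant a (Suc (m - i)) s)"
proof -
  let ?c = "deriv (fulcrum a) s" and ?\<sigma> = "sqrt ((deriv ^^ 2) (fulcrum a) s)"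
  have "std_moment a (Suc m) s = (\<Sum>i = 0..m. of_nat (m choose i) * moment_about a ?c i s *
           (if i = m then 0 else (deriv ^^ Suc (m - i)) (fulcrum a) s)) / ?\<sigma> ^ Suc m"
    by (simp add: std_moment_eq[OF s] moment_about_recursion[OF s refl] del: funpow.simps)
  also have "\<dots> = (\<Sum>i = 0..m. of_nat (m choose i) * std_moment a i s * std_cumulant a (Suc (m - i)) s)"
    unfolding sum_divide_distrib
  proof (rule sum.cong[OF refl])
    fix i assume i: "i \<in> {0..m}"
    then have "?\<sigma> ^ Suc m = ?\<sigma> ^ i * ?\<sigma> ^ Suc (m - i)"
      by (simp add: power_add[symmetric] Suc_diff_le)
    moreover have "std_cumulant a (Suc (m - i)) s =
        (if i = m then 0 else (deriv ^^ Suc (m - i)) (fulcrum a) s / ?\<sigma> ^ Suc (m - i))"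
      unfolding std_cumulant_def powr_half_nat[OF fulcrum_deriv2_pos[OF s]] using i by auto
    ultimately show "of_nat (m choose i) * moment_about a ?c i s *
          (if i = m then 0 else (deriv ^^ Suc (m - i)) (fulcrum a) s) / ?\<sigma> ^ Suc m =
        of_nat (m choose i) * std_moment a i s * std_cumulant a (Suc (m - i)) s"
      by (simp only: std_moment_eq[OF s])
         (cases "i = m"; simp add: divide_inverse mult_ac del: funpow.simps)
  qed
  finally show ?thesis .
qed

end

section \<open>The moment-cumulant recursion\<close>

fun normal_moment :: "nat \<Rightarrow> real" where
  "normal_moment 0 = 1"
| "normal_moment (Suc 0) = 0"
| "normal_moment (Suc (Suc m)) = real (Suc m) * normal_moment m"

definition normal_cumulant :: "nat \<Rightarrow> real" where
  "normal_cumulant j = (if j = 2 then 1 else 0)"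

lemma normal_moment_recursion:
  "normal_moment (Suc m) =
     (\<Sum>i = 0..m. of_nat (m choose i) * normal_moment i * normal_cumulant (Suc (m - i)))"
proof (cases m)
  case 0
  then show ?thesis by (simp add: normal_cumulant_def)
next
  case (Suc m')
  have "(\<Sum>i = 0..m. of_nat (m choose i) * normal_moment i * normal_cumulant (Suc (m - i)))
      = (\<Sum>i = 0..m. if i = m' then of_nat (m choose i) * normal_moment i else 0)"
    by (intro sum.cong) (auto simp: normal_cumulant_def Suc)
  then show ?thesis
    using Suc by simp
qed

lemma normal_moment_even: "normal_moment (2 * j) = fact (2 * j) / (2 ^ j * fact j)"
proof -
  have "normal_moment (2 * j) * (2 ^ j * fact j) = fact (2 * j)"
  proof (induction j)
    case 0
    then show ?case by simp
  next
    case (Suc j)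
    have "normal_moment (2 * Suc j) * (2 ^ Suc j * fact (Suc j)) =
        (2 * real j + 1) * (2 * real j + 2) * (normal_moment (2 * j) * (2 ^ j * fact j))"
      by (simp add: numeral_2_eq_2 algebra_simps)
    also have "\<dots> = fact (2 * Suc j)"
      unfolding Suc.IH by (simp add: numeral_2_eq_2 algebra_simps)
    finally show ?case .
  qed
  then show ?thesis
    by (simp add: field_simps)
qed

lemma normal_moment_odd: "normal_moment (Suc (2 * j)) = 0"
  by (induction j) (auto simp: numeral_2_eq_2)

lemma integral_std_normal_power: "integral\<^sup>L std_normal_distribution (\<lambda>x. x ^ k) = normal_moment k"
proof (cases "even k")
  case True
  then obtain j where "k = 2 * j" by (auto elim: evenE)
  then show ?thesis
    using std_normal_distribution_even_moments(1)[of j] by (simp add: normal_moment_even)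
next
  case False
  then obtain j where "k = Suc (2 * j)" by (auto elim: oddE)
  then show ?thesis
    using integral_std_normal_distribution_moment_odd[of k] False by (simp add: normal_moment_odd)
qed

lemma Bfun_add:
  fixes f g :: "'a \<Rightarrow> 'b::real_normed_vector"
  assumes "Bfun f F" "Bfun g F"
  shows "Bfun (\<lambda>x. f x + g x) F"
proof -
  obtain A B where "eventually (\<lambda>x. norm (f x) \<le> A) F" "eventually (\<lambda>x. norm (g x) \<le> B) F"
    using assms by (auto elim!: BfunE)
  then have "eventually (\<lambda>x. norm (f x + g x) \<le> A + B) F"
    by eventually_elim (rule norm_triangle_le, simp)
  then show ?thesis by (rule BfunI)
qed

lemma Bfun_mult:
  fixes f g :: "'a \<Rightarrow> 'b::real_normed_algebra"
  assumes "Bfun f F" "Bfun g F"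
  shows "Bfun (\<lambda>x. f x * g x) F"
proof -
  obtain A B where "eventually (\<lambda>x. norm (f x) \<le> A) F" "eventually (\<lambda>x. norm (g x) \<le> B) F"
    using assms by (auto elim!: BfunE)
  then have "eventually (\<lambda>x. norm (f x * g x) \<le> A * B) F"
    by eventually_elim (rule order_trans[OF norm_mult_ineq mult_mono'], auto)
  then show ?thesis by (rule BfunI)
qed

lemma Bfun_sum:
  fixes f :: "'i \<Rightarrow> 'a \<Rightarrow> 'b::real_normed_vector"
  shows "finite I \<Longrightarrow> (\<And>i. i \<in> I \<Longrightarrow> Bfun (f i) F) \<Longrightarrow> Bfun (\<lambda>x. \<Sum>i\<in>I. f i x) F"
  by (induction I rule: finite_induct) (auto intro: Bfun_add)

lemma Bfun_transform_eventually:
  fixes f g :: "'a \<Rightarrow> 'b::real_normed_vector"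
  assumes "Bfun f F" "eventually (\<lambda>x. f x = g x) F"
  shows "Bfun g F"
proof -
  obtain B where "eventually (\<lambda>x. norm (f x) \<le> B) F"
    using assms(1) by (auto elim!: BfunE)
  with assms(2) have "eventually (\<lambda>x. norm (g x) \<le> B) F"
    by eventually_elim simp
  then show ?thesis by (rule BfunI)
qed

lemma Limsup_abs_less_infinity_imp_Bfun:
  fixes f :: "'a \<Rightarrow> real"
  assumes "Limsup F (\<lambda>x. ereal \<bar>f x\<bar>) < \<infinity>"
  shows "Bfun f F"
proof -
  obtain B where "Limsup F (\<lambda>x. ereal \<bar>f x\<bar>) < ereal B"
    using assms ereal_dense2 by blast
  then have "eventually (\<lambda>x. ereal \<bar>f x\<bar> < ereal B) F"
    by (rule Limsup_lessD)
  then have "eventually (\<lambda>x. norm (f x) \<le> B) F"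
    by eventually_elim simp
  then show ?thesis
    by (rule BfunI)
qed

locale moment_cumulant_recursion =
  fixes F :: "'a filter" and mu kappa :: "nat \<Rightarrow> 'a \<Rightarrow> real"
  assumes eventually_recursion: "eventually (\<lambda>x. mu 0 x = 1 \<and> kappa 1 x = 0 \<and> kappa 2 x = 1 \<and>
      (\<forall>m. mu (Suc m) x = (\<Sum>i = 0..m. of_nat (m choose i) * mu i x * kappa (Suc (m - i)) x))) F"
begin

lemma eventually_moment_Suc:
  "eventually (\<lambda>x. (\<Sum>i = 0..m. of_nat (m choose i) * mu i x * kappa (Suc (m - i)) x) = mu (Suc m) x) F"
  using eventually_recursion by eventually_elim simp

lemma eventually_moment_0: "eventually (\<lambda>x. 1 = mu 0 x) F"
  using eventually_recursion by eventually_elim simp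

lemma eventually_cumulant_1_2:
  assumes "k \<ge> 1" "\<not> k \<ge> 3"
  shows "eventually (\<lambda>x. normal_cumulant k = kappa k x) F"
proof -
  have "k = 1 \<or> k = 2"
    using assms by auto
  show ?thesis
    using eventually_recursion
    by eventually_elim (use \<open>k = 1 \<or> k = 2\<close> in \<open>auto simp: normal_cumulant_def\<close>)
qed

lemma tendsto_cumulant_1_2: "k \<ge> 1 \<Longrightarrow> \<not> k \<ge> 3 \<Longrightarrow> (kappa k \<longlongrightarrow> normal_cumulant k) F"
  using eventually_cumulant_1_2 by (rule Lim_transform_eventually[OF tendsto_const])

lemma Bfun_moment:
  assumes "\<And>k. k \<ge> 3 \<Longrightarrow> Bfun (kappa k) F"
  shows "Bfun (mu m) F"
proof (induction m rule: less_induct)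
  case (less m)
  have Bfun_kappa: "Bfun (kappa k) F" if "k \<ge> 1" for k
  proof (cases "k \<ge> 3")
    case False
    show ?thesis
      using Bfun_transform_eventually[OF Bfun_const eventually_cumulant_1_2[OF that False]] .
  qed (rule assms)
  show ?case
  proof (cases m)
    case 0
    then show ?thesis
      using Bfun_transform_eventually[OF Bfun_const eventually_moment_0] by simp
  next
    case (Suc m')
    have "Bfun (\<lambda>x. \<Sum>i = 0..m'. of_nat (m' choose i) * mu i x * kappa (Suc (m' - i)) x) F"
      using less Suc by (intro Bfun_sum Bfun_mult Bfun_const Bfun_kappa) auto
    then show ?thesis
      unfolding Suc using eventually_moment_Suc by (rule Bfun_transform_eventually)
  qed
qed

lemma tendsto_moment_normal:
  assumes "\<And>k. k \<ge> 3 \<Longrightarrow> (kappa k \<longlongrightarrow> 0) F"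
  shows "(mu m \<longlongrightarrow> normal_moment m) F"
proof (induction m rule: less_induct)
  case (less m)
  have tendsto_kappa: "(kappa k \<longlongrightarrow> normal_cumulant k) F" if "k \<ge> 1" for k
  proof (cases "k \<ge> 3")
    case True
    then show ?thesis using assms by (simp add: normal_cumulant_def)
  qed (use that tendsto_cumulant_1_2 in blast)
  show ?case
  proof (cases m)
    case 0
    then show ?thesis
      using Lim_transform_eventually[OF tendsto_const eventually_moment_0] by simp
  next
    case (Suc m')
    have "((\<lambda>x. \<Sum>i = 0..m'. of_nat (m' choose i) * mu i x * kappa (Suc (m' - i)) x) \<longlongrightarrow>
        (\<Sum>i = 0..m'. of_nat (m' choose i) * normal_moment i * normal_cumulant (Suc (m' - i)))) F"
      using less Suc by (intro tendsto_sum tendsto_mult tendsto_const tendsto_kappa) auto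
    then show ?thesis
      unfolding Suc normal_moment_recursion[symmetric]
      using eventually_moment_Suc by (rule Lim_transform_eventually)
  qed
qed

lemma tendsto_cumulant_normal:
  assumes "\<And>m. (mu m \<longlongrightarrow> normal_moment m) F" "k \<ge> 1"
  shows "(kappa k \<longlongrightarrow> normal_cumulant k) F"
  using assms(2)
proof (induction k rule: less_induct)
  case (less k)
  show ?case
  proof (cases "k \<ge> 3")
    case True
    then obtain m where m: "k = Suc m" "m \<ge> 2"
      by (cases k) auto
    let ?rest = "\<lambda>x. \<Sum>i = 1..m. of_nat (m choose i) * mu i x * kappa (Suc (m - i)) x"
    have split_0: "(\<Sum>i = 0..m. f i) = f 0 + (\<Sum>i = 1..m. f i)" for f :: "nat \<Rightarrow> real"
      by (simp add: sum.atLeast_Suc_atMost)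
    have "eventually (\<lambda>x. mu (Suc m) x - ?rest x = kappa k x) F"
      using eventually_recursion by eventually_elim (simp add: split_0 m(1))
    moreover have "((\<lambda>x. mu (Suc m) x - ?rest x) \<longlongrightarrow>
        normal_moment (Suc m) - (\<Sum>i = 1..m. of_nat (m choose i) * normal_moment i * normal_cumulant (Suc (m - i)))) F"
      using m by (intro tendsto_diff tendsto_sum tendsto_mult tendsto_const assms(1) less.IH) auto
    moreover have "normal_moment (Suc m) -
        (\<Sum>i = 1..m. of_nat (m choose i) * normal_moment i * normal_cumulant (Suc (m - i))) = normal_cumulant k"
      using normal_moment_recursion[of m] m(1) by (simp add: split_0)
    ultimately show ?thesis
      using Lim_transform_eventually by fastforce
  qed (use less.prems tendsto_cumulant_1_2 in blast)
qed

end

section \<open>Method of moments for the normal law\<close>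

text \<open>The normal moments grow slowly enough for the Taylor polynomials of the characteristic
  function to converge: this is what makes the normal law determined by its moments.\<close>

lemma normal_moment_taylor_term_less:
  fixes u e :: real
  assumes "e > 0"
  obtains m where "even m" "\<bar>u\<bar> ^ m / fact m * normal_moment m < e"
proof -
  have "\<bar>u\<bar> ^ (2 * j) / fact (2 * j) * normal_moment (2 * j) = inverse (fact j) * (u\<^sup>2 / 2) ^ j" for j
  proof -
    have "\<bar>u\<bar> ^ (2 * j) = (u\<^sup>2) ^ j"
      by (simp add: power_mult)
    then show ?thesis
      unfolding normal_moment_even by (simp add: power_divide field_simps)
  qed
  then have "(\<lambda>j. \<bar>u\<bar> ^ (2 * j) / fact (2 * j) * normal_moment (2 * j)) \<longlonglongrightarrow> 0"
    using summable_LIMSEQ_zero[OF summable_exp[of "u\<^sup>2 / 2"]] by simp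
  then have "eventually (\<lambda>j. \<bar>u\<bar> ^ (2 * j) / fact (2 * j) * normal_moment (2 * j) < e) sequentially"
    using assms by (rule order_tendstoD(2))
  then obtain j where "\<bar>u\<bar> ^ (2 * j) / fact (2 * j) * normal_moment (2 * j) < e"
    by (auto simp: eventually_sequentially)
  then show ?thesis
    using that[of "2 * j"] by simp
qed

lemma char_dist_le_moments:
  assumes P: "real_distribution P" and Q: "real_distribution Q" and "even m"
    and "\<And>k. k \<le> m \<Longrightarrow> integrable P (\<lambda>x. x ^ k)" "\<And>k. k \<le> m \<Longrightarrow> integrable Q (\<lambda>x. x ^ k)"
  shows "dist (char P u) (char Q u) \<le>
      2 * \<bar>u\<bar> ^ m / fact m * (integral\<^sup>L P (\<lambda>x. x ^ m) + integral\<^sup>L Q (\<lambda>x. x ^ m)) +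
      cmod (\<Sum>k\<le>m. (\<i> * u) ^ k / fact k *
              complex_of_real (integral\<^sup>L P (\<lambda>x. x ^ k) - integral\<^sup>L Q (\<lambda>x. x ^ k)))"
proof -
  define T where "T R = (\<Sum>k\<le>m. (\<i> * u) ^ k / fact k * complex_of_real (integral\<^sup>L R (\<lambda>x. x ^ k)))"
    for R :: "real measure"
  have "cmod (char P u - T P) \<le> 2 * \<bar>u\<bar> ^ m / fact m * integral\<^sup>L P (\<lambda>x. x ^ m)"
    using real_distribution.char_approx1[OF P, of m u] assms by (simp add: T_def power_even_abs)
  moreover have "cmod (char Q u - T Q) \<le> 2 * \<bar>u\<bar> ^ m / fact m * integral\<^sup>L Q (\<lambda>x. x ^ m)"
    using real_distribution.char_approx1[OF Q, of m u] assms by (simp add: T_def power_even_abs)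
  moreover have "T P - T Q = (\<Sum>k\<le>m. (\<i> * u) ^ k / fact k *
      complex_of_real (integral\<^sup>L P (\<lambda>x. x ^ k) - integral\<^sup>L Q (\<lambda>x. x ^ k)))"
    by (simp add: T_def sum_subtractf[symmetric] algebra_simps)
  moreover have "dist (char P u) (char Q u) \<le>
      cmod (char P u - T P) + cmod (T P - T Q) + cmod (char Q u - T Q)"
    using norm_triangle_ineq4[of "char P u - T P" "char Q u - T Q"]
      norm_triangle_ineq[of "char P u - T P - (char Q u - T Q)" "T P - T Q"]
    by (simp add: dist_norm algebra_simps)
  ultimately show ?thesis
    by (simp add: algebra_simps)
qed

lemma weak_conv_std_normal_if_moments:
  fixes \<mu> :: "nat \<Rightarrow> real measure"
  assumes distr: "\<And>n. real_distribution (\<mu> n)"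
    and int: "\<And>k. eventually (\<lambda>n. integrable (\<mu> n) (\<lambda>x. x ^ k)) sequentially"
    and lim: "\<And>k. (\<lambda>n. integral\<^sup>L (\<mu> n) (\<lambda>x. x ^ k)) \<longlonglongrightarrow> normal_moment k"
  shows "weak_conv_m \<mu> std_normal_distribution"
proof (rule levy_continuity[OF distr real_dist_normal_dist])
  fix u :: real
  show "(\<lambda>n. char (\<mu> n) u) \<longlonglongrightarrow> char std_normal_distribution u"
    unfolding tendsto_iff
  proof (intro allI impI)
    fix e :: real assume "e > 0"
    then obtain m where "even m" and m: "\<bar>u\<bar> ^ m / fact m * normal_moment m < e / 4"
      using normal_moment_taylor_term_less[of "e / 4" u] by auto
    let ?B = "\<lambda>n. 2 * \<bar>u\<bar> ^ m / fact m *
                  (integral\<^sup>L (\<mu> n) (\<lambda>x. x ^ m) + integral\<^sup>L std_normal_distribution (\<lambda>x. x ^ m)) +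
                cmod (\<Sum>k\<le>m. (\<i> * u) ^ k / fact k * complex_of_real
                  (integral\<^sup>L (\<mu> n) (\<lambda>x. x ^ k) - integral\<^sup>L std_normal_distribution (\<lambda>x. x ^ k)))"
    have "(\<lambda>n. integral\<^sup>L (\<mu> n) (\<lambda>x. x ^ k) - integral\<^sup>L std_normal_distribution (\<lambda>x. x ^ k))
        \<longlonglongrightarrow> 0" for k
      using LIM_zero[OF lim[of k]] by (simp add: integral_std_normal_power)
    then have "(\<lambda>n. \<Sum>k\<le>m. (\<i> * u) ^ k / fact k * complex_of_real
        (integral\<^sup>L (\<mu> n) (\<lambda>x. x ^ k) - integral\<^sup>L std_normal_distribution (\<lambda>x. x ^ k))) \<longlonglongrightarrow> 0"
      by (intro tendsto_null_sum tendsto_mult_right_zero) (use tendsto_of_real in fastforce)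
    then have "?B \<longlonglongrightarrow> 2 * \<bar>u\<bar> ^ m / fact m * (normal_moment m + normal_moment m) + 0"
      unfolding integral_std_normal_power
      by (intro tendsto_add tendsto_mult tendsto_const lim tendsto_norm_zero)
    moreover have "2 * \<bar>u\<bar> ^ m / fact m * (normal_moment m + normal_moment m) + 0 < e"
      using m by (simp add: field_simps mult_ac)
    ultimately have "eventually (\<lambda>n. ?B n < e) sequentially"
      by (rule order_tendstoD(2))
    moreover have "eventually (\<lambda>n. \<forall>k\<in>{..m}. integrable (\<mu> n) (\<lambda>x. x ^ k)) sequentially"
      by (rule eventually_ball_finite) (auto intro: int)
    then have "eventually (\<lambda>n. dist (char (\<mu> n) u) (char std_normal_distribution u) \<le> ?B n) sequentially"
      by eventually_elim
         (rule char_dist_le_moments[OF distr real_dist_normal_dist \<open>even m\<close>],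
          auto intro: integrable_std_normal_distribution_moment)
    ultimately show "eventually (\<lambda>n. dist (char (\<mu> n) u) (char std_normal_distribution u) < e) sequentially"
      by eventually_elim simp
  qed
qed

definition truncated_power :: "real \<Rightarrow> nat \<Rightarrow> real \<Rightarrow> real" where
  "truncated_power K m x = (max (- K) (min K x)) ^ m"

lemma isCont_truncated_power: "isCont (truncated_power K m) x"
  unfolding truncated_power_def[abs_def] by (intro continuous_intros)

lemma norm_truncated_power_le: "K > 0 \<Longrightarrow> norm (truncated_power K m x) \<le> K ^ m"
  unfolding truncated_power_def by (auto simp: power_abs intro!: power_mono)

lemma abs_power_minus_truncated_power_le:
  assumes "K > 0"
  shows "\<bar>x ^ m - truncated_power K m x\<bar> \<le> 2 * x ^ (2 * m) / K ^ m"
proof (cases "\<bar>x\<bar> \<le> K")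
  case True
  then have "max (- K) (min K x) = x"
    by (simp add: abs_le_iff max_def min_def)
  then have "truncated_power K m x = x ^ m"
    by (simp add: truncated_power_def)
  moreover have "0 \<le> x ^ (2 * m)"
    by (simp add: power_mult)
  ultimately show ?thesis
    using assms by simp
next
  case False
  have "\<bar>max (- K) (min K x)\<bar> ^ m \<le> \<bar>x\<bar> ^ m"
    using False assms by (intro power_mono) auto
  then have "\<bar>x ^ m - truncated_power K m x\<bar> \<le> 2 * \<bar>x\<bar> ^ m"
    using abs_triangle_ineq4[of "x ^ m" "max (- K) (min K x) ^ m"]
    by (simp add: truncated_power_def power_abs)
  also have "\<bar>x\<bar> ^ m \<le> x ^ (2 * m) / K ^ m"
  proof -
    have "\<bar>x\<bar> ^ m * K ^ m \<le> \<bar>x\<bar> ^ m * \<bar>x\<bar> ^ m"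
      using False assms by (intro mult_left_mono power_mono) auto
    also have "\<dots> = x ^ (2 * m)"
      by (simp add: power_add[symmetric] mult_2 power_even_abs)
    finally show ?thesis
      using assms by (simp add: field_simps)
  qed
  finally show ?thesis
    by simp
qed

lemma abs_integral_power_minus_truncated_power_le:
  assumes "real_distribution P" "integrable P (\<lambda>x. x ^ m)" "integrable P (\<lambda>x. x ^ (2 * m))"
    and "integral\<^sup>L P (\<lambda>x. x ^ (2 * m)) \<le> B" "K > 0"
  shows "\<bar>integral\<^sup>L P (\<lambda>x. x ^ m) - integral\<^sup>L P (truncated_power K m)\<bar> \<le> 2 * B / K ^ m"
proof -
  interpret real_distribution P by fact
  have "truncated_power K m \<in> borel_measurable P"
    using isCont_truncated_power
    by (simp add: borel_measurable_continuous_onI continuous_at_imp_continuous_on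
                  measurable_cong_sets[OF events_eq_borel refl])
  then have int_trunc: "integrable P (truncated_power K m)"
    using norm_truncated_power_le[OF \<open>K > 0\<close>] by (intro integrable_const_bound[where B="K ^ m"]) auto
  have "\<bar>integral\<^sup>L P (\<lambda>x. x ^ m) - integral\<^sup>L P (truncated_power K m)\<bar> =
      \<bar>integral\<^sup>L P (\<lambda>x. x ^ m - truncated_power K m x)\<bar>"
    using assms(2) int_trunc by simp
  also have "\<dots> \<le> integral\<^sup>L P (\<lambda>x. 2 * x ^ (2 * m) / K ^ m)"
    using assms(2,3) int_trunc abs_power_minus_truncated_power_le[OF \<open>K > 0\<close>]
    by (intro integral_abs_bound_integral) auto
  also have "\<dots> = 2 * integral\<^sup>L P (\<lambda>x. x ^ (2 * m)) / K ^ m"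
    by simp
  also have "\<dots> \<le> 2 * B / K ^ m"
    using assms(4,5) by (simp add: divide_right_mono)
  finally show ?thesis .
qed

lemma eventually_div_power_less:
  fixes C e :: real
  assumes "m > 0" "e > 0"
  shows "eventually (\<lambda>K. 0 < K \<and> C / K ^ m < e) at_top"
proof -
  have "((\<lambda>K. C / K ^ m) \<longlongrightarrow> 0) at_top"
    using assms(1) by (intro tendsto_divide_0[OF tendsto_const] filterlim_at_top_imp_at_infinity
        filterlim_pow_at_top filterlim_ident) auto
  then show ?thesis
    using assms(2) by (intro eventually_conj eventually_gt_at_top order_tendstoD(2))
qed

lemma tendsto_moment_if_weak_conv:
  fixes \<mu> :: "nat \<Rightarrow> real measure"
  assumes distr: "\<And>n. real_distribution (\<mu> n)" and M: "real_distribution M"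
    and conv: "weak_conv_m \<mu> M"
    and int: "eventually (\<lambda>n. integrable (\<mu> n) (\<lambda>x. x ^ m) \<and> integrable (\<mu> n) (\<lambda>x. x ^ (2 * m))) sequentially"
    and int_M: "integrable M (\<lambda>x. x ^ m)" "integrable M (\<lambda>x. x ^ (2 * m))"
    and bound: "eventually (\<lambda>n. integral\<^sup>L (\<mu> n) (\<lambda>x. x ^ (2 * m)) \<le> B) sequentially"
  shows "(\<lambda>n. integral\<^sup>L (\<mu> n) (\<lambda>x. x ^ m)) \<longlonglongrightarrow> integral\<^sup>L M (\<lambda>x. x ^ m)"
proof (cases "m = 0")
  case True
  then show ?thesis
    using prob_space.prob_space[OF real_distribution.axioms(1)[OF distr]]
      prob_space.prob_space[OF real_distribution.axioms(1)[OF M]]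
    by simp
next
  case False
  show ?thesis
    unfolding tendsto_iff
  proof (intro allI impI)
    fix e :: real assume "e > 0"
    define B' where "B' = max B (integral\<^sup>L M (\<lambda>x. x ^ (2 * m)))"
    have "eventually (\<lambda>K. 0 < K \<and> 4 * B' / K ^ m < e / 2) at_top"
      using False \<open>e > 0\<close> by (intro eventually_div_power_less) auto
    then obtain K where "K > 0" and K: "4 * B' / K ^ m < e / 2"
      by (auto dest: eventually_happens)
    have "(\<lambda>n. integral\<^sup>L (\<mu> n) (truncated_power K m)) \<longlonglongrightarrow> integral\<^sup>L M (truncated_power K m)"
      using norm_truncated_power_le[OF \<open>K > 0\<close>]
      by (intro weak_conv_imp_integral_bdd_continuous_conv[OF distr M conv isCont_truncated_power])
    then have "eventually (\<lambda>n. dist (integral\<^sup>L (\<mu> n) (truncated_power K m))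
        (integral\<^sup>L M (truncated_power K m)) < e / 2) sequentially"
      using tendstoD[of _ _ _ "e / 2"] \<open>e > 0\<close> by simp
    then show "eventually (\<lambda>n. dist (integral\<^sup>L (\<mu> n) (\<lambda>x. x ^ m)) (integral\<^sup>L M (\<lambda>x. x ^ m)) < e) sequentially"
      using int bound
    proof eventually_elim
      case (elim n)
      have "\<bar>integral\<^sup>L (\<mu> n) (\<lambda>x. x ^ m) - integral\<^sup>L (\<mu> n) (truncated_power K m)\<bar> \<le> 2 * B' / K ^ m"
        using elim \<open>K > 0\<close> by (intro abs_integral_power_minus_truncated_power_le distr) (auto simp: B'_def)
      moreover have "\<bar>integral\<^sup>L M (\<lambda>x. x ^ m) - integral\<^sup>L M (truncated_power K m)\<bar> \<le> 2 * B' / K ^ m"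
        using int_M \<open>K > 0\<close> by (intro abs_integral_power_minus_truncated_power_le M) (auto simp: B'_def)
      ultimately show ?case
        using elim(1) K unfolding dist_real_def by linarith
    qed
  qed
qed

lemma isCont_cdf_std_normal: "isCont (cdf std_normal_distribution) x"
proof -
  interpret real_distribution std_normal_distribution
    by (rule real_dist_normal_dist)
  have "AE y in lborel. y \<in> {x} \<longrightarrow> ennreal (std_normal_density y) = 0"
    using AE_lborel_singleton[of x] by eventually_elim auto
  then have "measure std_normal_distribution {x} = 0"
    by (simp add: measure_def emeasure_density AE_iff_measurable)
  then show ?thesis
    by (simp add: isCont_cdf)
qed

lemma weak_conv_std_normal_iff:
  "weak_conv_m \<mu> std_normal_distribution \<longleftrightarrow> (\<forall>x. (\<lambda>n. cdf (\<mu> n) x) \<longlonglongrightarrow> Phi x)"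
proof -
  have "Phi x = cdf std_normal_distribution x" for x
    by (simp add: Phi_def cdf_def)
  then show ?thesis
    using isCont_cdf_std_normal by (simp add: weak_conv_m_def weak_conv_def)
qed

lemma tendsto_left_filter_sequentially:
  fixes f :: "real \<Rightarrow> real"
  assumes "\<And>X. filterlim X (left_filter L) sequentially \<Longrightarrow> (\<lambda>n. f (X n)) \<longlonglongrightarrow> l"
  shows "(f \<longlongrightarrow> l) (left_filter L)"
proof (cases "L = \<infinity>")
  case True
  then show ?thesis
    using assms by (simp add: left_filter_def tendsto_at_topI_sequentially)
next
  case False
  let ?r = "real_of_ereal L"
  have "(f \<longlongrightarrow> l) (at_left ?r)"
  proof (rule tendsto_at_left_sequentially[of "?r - 1"])
    fix X :: "nat \<Rightarrow> real" assume "\<And>n. X n < ?r" "X \<longlonglongrightarrow> ?r"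
    then have "filterlim X (at_left ?r) sequentially"
      by (intro tendsto_imp_filterlim_at_left) auto
    then show "(\<lambda>n. f (X n)) \<longlonglongrightarrow> l"
      using assms False by (simp add: left_filter_def)
  qed simp
  then show ?thesis
    using False by (simp add: left_filter_def)
qed

lemma eventually_exp_less_left_filter:
  assumes "0 < R"
  shows "eventually (\<lambda>s. ereal (exp s) < R) (left_filter (ln_ereal R))"
proof (cases R)
  case (real r)
  have "eventually (\<lambda>s. s < ln r) (at_left (ln r))"
    by (simp add: eventually_at_filter)
  then have "eventually (\<lambda>s. ereal (exp s) < R) (at_left (ln r))"
  proof eventually_elim
    case (elim s)
    then have "exp s < exp (ln r)"
      by (rule exp_less_mono)
    then show ?case
      using real assms by (simp del: exp_less_cancel_iff)
  qed
  then show ?thesis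
    using real by (simp add: left_filter_def ln_ereal_def)
qed (use assms in \<open>auto simp: left_filter_def ln_ereal_def\<close>)

lemma filterlim_exp_left_filter:
  assumes "0 < R"
  shows "filterlim exp (left_filter R) (left_filter (ln_ereal R))"
proof (cases R)
  case (real r)
  have "(exp \<longlongrightarrow> exp (ln r)) (at_left (ln r))"
    by (intro tendsto_intros tendsto_ident_at)
  then have "(exp \<longlongrightarrow> r) (at_left (ln r))"
    using real assms by simp
  moreover have "eventually (\<lambda>s. exp s < r) (at_left (ln r))"
    using eventually_exp_less_left_filter[OF assms] real by (simp add: left_filter_def ln_ereal_def)
  ultimately have "filterlim exp (at_left r) (at_left (ln r))"
    by (rule tendsto_imp_filterlim_at_left)
  then show ?thesis
    using real by (simp add: left_filter_def ln_ereal_def)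
qed (use assms in \<open>auto simp: left_filter_def ln_ereal_def exp_at_top\<close>)

lemma filterlim_ln_left_filter:
  assumes "0 < R"
  shows "filterlim ln (left_filter (ln_ereal R)) (left_filter R)"
proof (cases R)
  case (real r)
  then have "r > 0"
    using assms by simp
  have "(ln \<longlongrightarrow> ln r) (at_left r)"
    using \<open>r > 0\<close> by (intro tendsto_intros tendsto_ident_at) auto
  moreover have "eventually (\<lambda>t. t \<in> {0<..<r}) (at_left r)"
    using \<open>r > 0\<close> by (intro eventually_at_left_real) auto
  then have "eventually (\<lambda>t. ln t < ln r) (at_left r)"
    by eventually_elim auto
  ultimately have "filterlim ln (at_left (ln r)) (at_left r)"
    by (rule tendsto_imp_filterlim_at_left)
  then show ?thesis
    using real by (simp add: left_filter_def ln_ereal_def)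
qed (use assms in \<open>auto simp: left_filter_def ln_ereal_def ln_at_top\<close>)

lemma eventually_pos_left_filter:
  assumes "0 < R"
  shows "eventually (\<lambda>t. 0 < t) (left_filter R)"
proof (cases R)
  case (real r)
  then have "eventually (\<lambda>t. t \<in> {0<..<r}) (at_left r)"
    using assms by (intro eventually_at_left_real) auto
  then show ?thesis
    using real by (auto simp: left_filter_def elim: eventually_mono)
qed (use assms in \<open>auto simp: left_filter_def eventually_gt_at_top\<close>)

section \<open>The standardized distribution of X_t\<close>

abbreviation at_ln_radius :: "(nat \<Rightarrow> real) \<Rightarrow> real filter" where
  "at_ln_radius a \<equiv> left_filter (ln_ereal (conv_radius a))"

definition X_distr :: "(nat \<Rightarrow> real) \<Rightarrow> real \<Rightarrow> nat measure" where
  "X_distr a t = density (count_space UNIV) (\<lambda>n. ennreal (a n * t ^ n / psum a t))"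

text \<open>Outside the domain of the fulcrum the value is irrelevant; the normal law only keeps this a
  real distribution for every \<open>s\<close>.\<close>

definition std_X_distr :: "(nat \<Rightarrow> real) \<Rightarrow> real \<Rightarrow> real measure" where
  "std_X_distr a s = (if s \<in> fulcrum_domain a
     then distr (X_distr a (exp s)) borel (\<lambda>n. (real n - mean_f a (exp s)) / sigma_f a (exp s))
     else std_normal_distribution)"

context
  fixes a :: "nat \<Rightarrow> real"
  assumes classK: "classK a"
begin

lemma classK_nonneg: "a n \<ge> 0"
  using classK by (simp add: classK_def)

lemma point_mass_nonneg: "s \<in> fulcrum_domain a \<Longrightarrow> a n * exp s ^ n / psum a (exp s) \<ge> 0"
  using classK_nonneg psum_exp_pos[OF classK] by (simp add: less_imp_le)

lemma summable_abs_centered_power_mass: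
  assumes "s \<in> fulcrum_domain a"
  shows "summable (\<lambda>n. \<bar>real n - c\<bar> ^ k * (a n * exp s ^ n / psum a (exp s)))"
proof -
  have "summable (\<lambda>n. \<bar>centered_coeffs a c k n * exp s ^ n\<bar> / psum a (exp s))"
    using abs_summable_in_conv_radius[of "exp s" "centered_coeffs a c k"]
      exp_less_conv_radius_centered_coeffs[OF assms]
    by (intro summable_divide) simp
  then show ?thesis
    using psum_exp_pos[OF classK assms]
    by (simp add: centered_coeffs_def abs_mult power_abs abs_of_nonneg[OF classK_nonneg] mult_ac)
qed

lemma prob_space_X_distr:
  assumes "s \<in> fulcrum_domain a"
  shows "prob_space (X_distr a (exp s))"
proof
  have "summable (\<lambda>n. a n * exp s ^ n / psum a (exp s))"
    using summable_abs_centered_power_mass[OF assms, of 0 0] by simp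
  then have "(\<Sum>n. ennreal (a n * exp s ^ n / psum a (exp s))) = ennreal 1"
    using moment_about_eq_suminf[OF classK assms, of 0 0] moment_about_0[OF classK assms]
      psum_exp_pos[OF classK assms] classK
    by (subst suminf_ennreal2) (auto simp: classK_def)
  then show "emeasure (X_distr a (exp s)) (space (X_distr a (exp s))) = 1"
    by (simp add: X_distr_def emeasure_density nn_integral_count_space_nat)
qed

lemma real_distribution_std_X_distr: "real_distribution (std_X_distr a s)"
  unfolding std_X_distr_def
  using prob_space_X_distr[of s] real_dist_normal_dist
  by (auto intro!: prob_space.real_distribution_distr simp: X_distr_def)

lemma std_X_distr_eq:
  "s \<in> fulcrum_domain a \<Longrightarrow>
     std_X_distr a s = distr (X_distr a (exp s)) borel (\<lambda>n. (real n - mean_f a (exp s)) / sigma_f a (exp s))"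
  by (simp add: std_X_distr_def)

lemma std_X_distr_power:
  assumes s: "s \<in> fulcrum_domain a"
  shows "integrable (std_X_distr a s) (\<lambda>x. x ^ k)"
    and "integral\<^sup>L (std_X_distr a s) (\<lambda>x. x ^ k) = std_moment a k s"
proof -
  let ?p = "\<lambda>n. a n * exp s ^ n / psum a (exp s)"
  let ?Y = "\<lambda>n. (real n - mean_f a (exp s)) / sigma_f a (exp s)"
  note p_nonneg = point_mass_nonneg[OF s]
  note D = std_X_distr_eq[OF s]
  have "summable (\<lambda>n. \<bar>real n - mean_f a (exp s)\<bar> ^ k * ?p n / \<bar>sigma_f a (exp s)\<bar> ^ k)"
    using summable_abs_centered_power_mass[OF s] by (rule summable_divide)
  then have int: "integrable (count_space UNIV) (\<lambda>n. ?p n *\<^sub>R ?Y n ^ k)"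
    unfolding integrable_count_space_nat_iff
    by (simp add: p_nonneg abs_mult power_divide power_abs abs_of_nonneg[OF classK_nonneg] mult_ac)
  show "integrable (std_X_distr a s) (\<lambda>x. x ^ k)"
    unfolding D X_distr_def using int
    by (subst integrable_distr_eq) (auto simp: integrable_density p_nonneg)
  have "integral\<^sup>L (std_X_distr a s) (\<lambda>x. x ^ k) = integral\<^sup>L (X_distr a (exp s)) (\<lambda>n. ?Y n ^ k)"
    unfolding D by (rule integral_distr) (simp_all add: X_distr_def)
  also have "\<dots> = integral\<^sup>L (count_space UNIV) (\<lambda>n. ?p n *\<^sub>R ?Y n ^ k)"
    unfolding X_distr_def by (rule integral_density) (auto simp: p_nonneg)
  also have "\<dots> = (\<Sum>n. ?p n *\<^sub>R ?Y n ^ k)"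
    by (rule integral_count_space_nat[OF int])
  also have "\<dots> = std_moment a k s"
    by (simp add: std_moment_def mult_ac)
  finally show "integral\<^sup>L (std_X_distr a s) (\<lambda>x. x ^ k) = std_moment a k s" .
qed

lemma cdf_std_X_distr:
  assumes s: "s \<in> fulcrum_domain a"
  shows "cdf (std_X_distr a s) x =
           prob_X a (exp s) {n. (real n - mean_f a (exp s)) / sigma_f a (exp s) \<le> x}"
proof -
  let ?A = "{n. (real n - mean_f a (exp s)) / sigma_f a (exp s) \<le> x}"
  let ?p = "\<lambda>n. a n * exp s ^ n / psum a (exp s)"
  let ?q = "\<lambda>n. if n \<in> ?A then ?p n else 0"
  have q_nonneg: "?q n \<ge> 0" for n
    using point_mass_nonneg[OF s] by simp
  have "summable ?p"
    using summable_abs_centered_power_mass[OF s, of 0 0] by simp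
  then have "summable ?q"
    by (rule summable_comparison_test'[where N=0]) (use point_mass_nonneg[OF s] in auto)
  have "(\<lambda>n. (real n - mean_f a (exp s)) / sigma_f a (exp s)) -` {..x} \<inter> space (X_distr a (exp s)) = ?A"
    by (auto simp: X_distr_def)
  then have "cdf (std_X_distr a s) x = measure (X_distr a (exp s)) ?A"
    unfolding cdf_def std_X_distr_eq[OF s] by (subst measure_distr) (auto simp: X_distr_def)
  also have "\<dots> = (\<Sum>n. ?q n)"
  proof -
    have "emeasure (X_distr a (exp s)) ?A = (\<Sum>n. ennreal (?q n))"
      unfolding X_distr_def
      by (simp add: emeasure_density nn_integral_count_space_nat) (rule suminf_cong, simp)
    also have "\<dots> = ennreal (\<Sum>n. ?q n)"
      using q_nonneg \<open>summable ?q\<close> by (rule suminf_ennreal2)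
    finally show ?thesis
      using suminf_nonneg[OF \<open>summable ?q\<close> q_nonneg] by (simp add: measure_def)
  qed
  also have "\<dots> = prob_X a (exp s) ?A"
  proof -
    have q_eq: "?q = (\<lambda>n. (if n \<in> ?A then a n * exp s ^ n else 0) / psum a (exp s))"
      by (simp add: fun_eq_iff)
    then have "summable (\<lambda>n. if n \<in> ?A then a n * exp s ^ n else 0)"
      using \<open>summable ?q\<close> psum_exp_pos[OF classK s] by simp
    then show ?thesis
      unfolding prob_X_def q_eq by (rule suminf_divide)
  qed
  finally show ?thesis .
qed

lemma classK_conv_radius_pos: "0 < conv_radius a"
  using classK by (simp add: classK_def)

lemma eventually_fulcrum_domain: "eventually (\<lambda>s. s \<in> fulcrum_domain a) (at_ln_radius a)"
  using eventually_exp_less_left_filter[OF classK_conv_radius_pos] by (simp add: fulcrum_domain_def)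

lemma moment_cumulant_recursion_std:
  "moment_cumulant_recursion (at_ln_radius a) (std_moment a) (std_cumulant a)"
  using eventually_fulcrum_domain
  by unfold_locales
     (auto elim!: eventually_mono simp: std_moment_0 std_cumulant_2 std_moment_recursion
        std_cumulant_1[unfolded One_nat_def] classK)

lemma gaussian_iff_cdf_std_X_distr:
  "gaussian a \<longleftrightarrow> (\<forall>x. ((\<lambda>s. cdf (std_X_distr a s) x) \<longlongrightarrow> Phi x) (at_ln_radius a))"
proof -
  let ?P = "\<lambda>x t. prob_X a t {n. (real n - mean_f a t) / sigma_f a t \<le> x}"
  have cdf_eq: "eventually (\<lambda>s. cdf (std_X_distr a s) x = ?P x (exp s)) (at_ln_radius a)" for x
    using eventually_fulcrum_domain by eventually_elim (rule cdf_std_X_distr)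
  have "((\<lambda>s. ?P x (exp s)) \<longlongrightarrow> Phi x) (at_ln_radius a) \<longleftrightarrow>
      (?P x \<longlongrightarrow> Phi x) (left_filter (conv_radius a))" for x
  proof
    assume "((\<lambda>s. ?P x (exp s)) \<longlongrightarrow> Phi x) (at_ln_radius a)"
    then have "((\<lambda>t. ?P x (exp (ln t))) \<longlongrightarrow> Phi x) (left_filter (conv_radius a))"
      by (rule filterlim_compose[OF _ filterlim_ln_left_filter[OF classK_conv_radius_pos]])
    then show "(?P x \<longlongrightarrow> Phi x) (left_filter (conv_radius a))"
      by (rule Lim_transform_eventually)
         (use eventually_pos_left_filter[OF classK_conv_radius_pos] in \<open>auto elim: eventually_mono\<close>)
  qed (rule filterlim_compose[OF _ filterlim_exp_left_filter[OF classK_conv_radius_pos]])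
  then show ?thesis
    unfolding gaussian_def using tendsto_cong[OF cdf_eq] by simp
qed

lemma eventually_std_X_distr_power:
  assumes "filterlim X (at_ln_radius a) sequentially"
  shows "eventually (\<lambda>n. integrable (std_X_distr a (X n)) (\<lambda>x. x ^ k) \<and>
           integral\<^sup>L (std_X_distr a (X n)) (\<lambda>x. x ^ k) = std_moment a k (X n)) sequentially"
  using eventually_fulcrum_domain assms unfolding filterlim_iff
  by (auto elim!: eventually_mono simp: std_X_distr_power)

lemma eventually_integrable_std_X_distr_power:
  assumes "filterlim X (at_ln_radius a) sequentially"
  shows "eventually (\<lambda>n. integrable (std_X_distr a (X n)) (\<lambda>x. x ^ k)) sequentially"
  using eventually_std_X_distr_power[OF assms, of k] by (rule eventually_mono) simp

lemma gaussian_if_std_cumulants_tendsto_0: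
  assumes "\<And>k. k \<ge> 3 \<Longrightarrow> (std_cumulant a k \<longlongrightarrow> 0) (at_ln_radius a)"
  shows "gaussian a"
  unfolding gaussian_iff_cdf_std_X_distr
proof (intro allI tendsto_left_filter_sequentially)
  fix x and X :: "nat \<Rightarrow> real"
  assume X: "filterlim X (at_ln_radius a) sequentially"
  interpret moment_cumulant_recursion "at_ln_radius a" "std_moment a" "std_cumulant a"
    by (rule moment_cumulant_recursion_std)
  have "(\<lambda>n. integral\<^sup>L (std_X_distr a (X n)) (\<lambda>x. x ^ k)) \<longlonglongrightarrow> normal_moment k" for k
    using filterlim_compose[OF tendsto_moment_normal[OF assms] X]
    by (rule Lim_transform_eventually)
       (use eventually_std_X_distr_power[OF X, of k] in \<open>auto elim: eventually_mono\<close>)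
  then have "weak_conv_m (\<lambda>n. std_X_distr a (X n)) std_normal_distribution"
    by (intro weak_conv_std_normal_if_moments real_distribution_std_X_distr
        eventually_integrable_std_X_distr_power[OF X])
  then show "(\<lambda>n. cdf (std_X_distr a (X n)) x) \<longlonglongrightarrow> Phi x"
    by (simp add: weak_conv_std_normal_iff)
qed

lemma std_moments_tendsto_normal_if_gaussian:
  assumes "\<And>k. k \<ge> 3 \<Longrightarrow> Bfun (std_cumulant a k) (at_ln_radius a)" and "gaussian a"
  shows "(std_moment a m \<longlongrightarrow> normal_moment m) (at_ln_radius a)"
proof (rule tendsto_left_filter_sequentially)
  fix X assume X: "filterlim X (at_ln_radius a) sequentially"
  have conv: "weak_conv_m (\<lambda>n. std_X_distr a (X n)) std_normal_distribution"
    using \<open>gaussian a\<close> filterlim_compose[OF _ X]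
    by (auto simp: weak_conv_std_normal_iff gaussian_iff_cdf_std_X_distr)
  obtain B where "eventually (\<lambda>s. norm (std_moment a (2 * m) s) \<le> B) (at_ln_radius a)"
    using moment_cumulant_recursion.Bfun_moment[OF moment_cumulant_recursion_std assms(1)]
    by (blast elim: BfunE)
  then have "eventually (\<lambda>n. norm (std_moment a (2 * m) (X n)) \<le> B) sequentially"
    using X unfolding filterlim_iff by blast
  then have bound: "eventually (\<lambda>n. integral\<^sup>L (std_X_distr a (X n)) (\<lambda>x. x ^ (2 * m)) \<le> B) sequentially"
    using eventually_std_X_distr_power[OF X, of "2 * m"] by eventually_elim auto
  have int: "eventually (\<lambda>n. integrable (std_X_distr a (X n)) (\<lambda>x. x ^ m) \<and>
      integrable (std_X_distr a (X n)) (\<lambda>x. x ^ (2 * m))) sequentially"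
    by (intro eventually_conj eventually_integrable_std_X_distr_power[OF X])
  have "(\<lambda>n. integral\<^sup>L (std_X_distr a (X n)) (\<lambda>x. x ^ m)) \<longlonglongrightarrow> normal_moment m"
    using tendsto_moment_if_weak_conv[OF real_distribution_std_X_distr real_dist_normal_dist
        conv int integrable_std_normal_distribution_moment integrable_std_normal_distribution_moment bound]
    by (simp add: integral_std_normal_power)
  then show "(\<lambda>n. std_moment a m (X n)) \<longlonglongrightarrow> normal_moment m"
    by (rule Lim_transform_eventually)
       (use eventually_std_X_distr_power[OF X, of m] in \<open>auto elim: eventually_mono\<close>)
qed

lemma std_cumulants_tendsto_0_if_gaussian:
  assumes "\<And>k. k \<ge> 3 \<Longrightarrow> Bfun (std_cumulant a k) (at_ln_radius a)" and "gaussian a" and "k \<ge> 3"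
  shows "(std_cumulant a k \<longlongrightarrow> 0) (at_ln_radius a)"
proof -
  interpret moment_cumulant_recursion "at_ln_radius a" "std_moment a" "std_cumulant a"
    by (rule moment_cumulant_recursion_std)
  show ?thesis
    using tendsto_cumulant_normal[OF std_moments_tendsto_normal_if_gaussian[OF assms(1,2)], of k]
      \<open>k \<ge> 3\<close>
    by (simp add: normal_cumulant_def)
qed

end

theorem theorem3p4:
  fixes a :: "nat \<Rightarrow> real"
  assumes "classK a"
    and "\<forall>k::nat. k \<ge> 3 \<longrightarrow>
           Limsup (left_filter (ln_ereal (conv_radius a)))
             (\<lambda>s. ereal (\<bar>(deriv ^^ k) (fulcrum a) s\<bar> /
                          ((deriv ^^ 2) (fulcrum a) s) powr (real k / 2))) < \<infinity>"
  shows "gaussian a \<longleftrightarrow>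
         (\<forall>k::nat. k \<ge> 3 \<longrightarrow>
            ((\<lambda>s. (deriv ^^ k) (fulcrum a) s / ((deriv ^^ 2) (fulcrum a) s) powr (real k / 2))
               \<longlongrightarrow> 0) (left_filter (ln_ereal (conv_radius a))))"
proof -
  have cumulant: "std_cumulant a k =
      (\<lambda>s. (deriv ^^ k) (fulcrum a) s / ((deriv ^^ 2) (fulcrum a) s) powr (real k / 2))"
    if "k \<ge> 3" for k
    using that by (simp add: fun_eq_iff std_cumulant_def)
  have "Bfun (std_cumulant a k) (at_ln_radius a)" if "k \<ge> 3" for k
    using assms(2) that by (intro Limsup_abs_less_infinity_imp_Bfun) (simp add: cumulant)
  then show ?thesis
    using gaussian_if_std_cumulants_tendsto_0[OF assms(1)]
      std_cumulants_tendsto_0_if_gaussian[OF assms(1)] cumulant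
    by auto
qed

end
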